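(* Let $T$ be a $d$-ary tree with $n$ leaves and let $1\le k<\ell\le n$. For $m\ge 1$ let $A^{(m)}$ be the tree obtained from $T$ by attaching a $d$-ary caret at the $k$-th leaf $m$ times in succession (so $A^{(1)}=T_k$, $A^{(j+1)}=(A^{(j)})_k$), and let $B^{(1)}=T_\ell$ and $B^{(j+1)}=(B^{(j)})_{\ell+j(d-1)}$. Then in $F_d$, $[T_k,T_\ell]^m=[A^{(m)},B^{(m)}]$ for every $m\in\mathbb{N}$.
   Context: Fix $d\ge 2$. A $d$-ary tree is a finite rooted tree in which each non-leaf vertex has exactly $d$ ordered children; leaves are numbered $1,\dots,n$ left to right. For $1\le k\le n(T)$, $T_k$ denotes $T$ with a $d$-ary caret (root with $d$ leaf children) attached to its $k$-th leaf. The Higman–Thompson group $F_d$ consists of classes $[T,U]$ of pairs of $d$-ary trees with the same number $n$ of leaves, under the equivalence generated by $(T,U)\sim(T_k,U_k)$ for $1\le k\le n$, with product $[T,U][U,W]=[T,W]$. *)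

theory Defs
  imports Main
begin

datatype tree = Leaf | Node "tree list"

fun leaves :: "tree \<Rightarrow> nat" where
  "leaves Leaf = 1"
| "leaves (Node ts) = sum_list (map leaves ts)"

fun dary :: "nat \<Rightarrow> tree \<Rightarrow> bool" where
  "dary d Leaf = True"
| "dary d (Node ts) = (length ts = d \<and> (\<forall>t\<in>set ts. dary d t))"

definition caret :: "nat \<Rightarrow> tree" where
  "caret d = Node (replicate d Leaf)"

text \<open>attach d k T = T_k: attach a d-ary caret to the k-th leaf (leaves numbered
  1..n from left to right).\<close>
fun attach :: "nat \<Rightarrow> nat \<Rightarrow> tree \<Rightarrow> tree"
and attach_list :: "nat \<Rightarrow> nat \<Rightarrow> tree list \<Rightarrow> tree list" where
  "attach d k Leaf = (if k = 1 then caret d else Leaf)"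
| "attach d k (Node ts) = Node (attach_list d k ts)"
| "attach_list d k [] = []"
| "attach_list d k (t # ts) =
     (if k \<le> leaves t then attach d k t # ts else t # attach_list d (k - leaves t) ts)"

definition valid_pair :: "nat \<Rightarrow> tree \<times> tree \<Rightarrow> bool" where
  "valid_pair d p = (dary d (fst p) \<and> dary d (snd p) \<and> leaves (fst p) = leaves (snd p))"

definition expand :: "nat \<Rightarrow> tree \<times> tree \<Rightarrow> tree \<times> tree \<Rightarrow> bool" where
  "expand d p q = (valid_pair d p \<and>
     (\<exists>k. 1 \<le> k \<and> k \<le> leaves (fst p) \<and> q = (attach d k (fst p), attach d k (snd p))))"

text \<open>The equivalence relation on valid pairs generated by expansions; [T,U] is the class.\<close>
definition fd_equiv :: "nat \<Rightarrow> tree \<times> tree \<Rightarrow> tree \<times> tree \<Rightarrow> bool" where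
  "fd_equiv d p q = (valid_pair d p \<and> (\<lambda>x y. expand d x y \<or> expand d y x)\<^sup>*\<^sup>* p q)"

text \<open>Product in F_d on representatives: [T,U][U,W] = [T,W], computed by choosing
  representatives of the two classes with matching middle tree.\<close>
definition fd_mult :: "nat \<Rightarrow> tree \<times> tree \<Rightarrow> tree \<times> tree \<Rightarrow> tree \<times> tree" where
  "fd_mult d p q = (SOME r. \<exists>T U W. fd_equiv d p (T, U) \<and> fd_equiv d q (U, W) \<and> r = (T, W))"

fun fd_pow :: "nat \<Rightarrow> tree \<times> tree \<Rightarrow> nat \<Rightarrow> tree \<times> tree" where
  "fd_pow d p 0 = (Leaf, Leaf)"
| "fd_pow d p (Suc m) = fd_mult d (fd_pow d p m) p"

definition A_iter :: "nat \<Rightarrow> nat \<Rightarrow> tree \<Rightarrow> nat \<Rightarrow> tree" where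
  "A_iter d k T m = (attach d k ^^ m) T"

fun B_iter :: "nat \<Rightarrow> nat \<Rightarrow> tree \<Rightarrow> nat \<Rightarrow> tree" where
  "B_iter d l T 0 = T"
| "B_iter d l T (Suc j) = (if j = 0 then attach d l T
                           else attach d (l + j * (d - 1)) (B_iter d l T j))"

end

theory Submission
  imports Defs
begin

text \<open>Equivalence of pairs of \<open>d\<close>-ary trees is described by grafting: \<open>(X, Y)\<close> and
  \<open>(X', Y')\<close> represent the same element iff grafting suitable \<open>d\<close>-ary forests onto their
  leaves yields the same pair. Grafting a forest is a sequence of expansions, and any two
  \<open>d\<close>-ary trees have a common expansion, which makes this relation transitive; since
  grafting is injective it is also compatible with the product, so \<open>fd_mult\<close> may be
  computed on any representatives with matching middle trees. Carets at leaves \<open>k < p\<close>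
  commute once \<open>p\<close> is shifted by \<open>d - 1\<close>, hence ((B^(j))_k, B^(j+1)) represents
  [T_k, T_l] for every j, and multiplying [A^(m), B^(m)] = [A^(m+1), (B^(m))_k] by it is
  the induction step.\<close>

abbreviation leaves_list :: "tree list \<Rightarrow> nat" where
  "leaves_list ts \<equiv> sum_list (map leaves ts)"

abbreviation dary_list :: "nat \<Rightarrow> tree list \<Rightarrow> bool" where
  "dary_list d ts \<equiv> \<forall>t\<in>set ts. dary d t"

lemma valid_pair_Pair [simp]:
  "valid_pair d (X, Y) \<longleftrightarrow> dary d X \<and> dary d Y \<and> leaves X = leaves Y"
  by (simp add: valid_pair_def)

text \<open>\<open>graft t fs\<close> plugs the trees of \<open>fs\<close>, from left to right, into the leaves of \<open>t\<close>;
  it is meant for \<open>length fs = leaves t\<close>.\<close>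

fun graft :: "tree \<Rightarrow> tree list \<Rightarrow> tree"
and graft_list :: "tree list \<Rightarrow> tree list \<Rightarrow> tree list" where
  "graft Leaf fs = (case fs of [] \<Rightarrow> Leaf | t # _ \<Rightarrow> t)"
| "graft (Node ts) fs = Node (graft_list ts fs)"
| "graft_list [] fs = []"
| "graft_list (t # ts) fs = graft t (take (leaves t) fs) # graft_list ts (drop (leaves t) fs)"

lemma length_graft_list [simp]: "length (graft_list ts fs) = length ts"
  by (induction ts arbitrary: fs) auto

lemma leaves_list_take_drop: "leaves_list fs = leaves_list (take n fs) + leaves_list (drop n fs)"
  by (metis append_take_drop_id map_append sum_list_append)

lemma leaves_graft:
  "length fs = leaves t \<Longrightarrow> leaves (graft t fs) = leaves_list fs"
  "length fs = leaves_list ts \<Longrightarrow> leaves_list (graft_list ts fs) = leaves_list fs"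
proof (induction t fs and ts fs rule: graft_graft_list.induct)
  case (1 fs)
  then show ?case by (cases fs) auto
next
  case (4 t ts fs)
  then show ?case using leaves_list_take_drop[of fs "leaves t"] by simp
qed auto

lemma dary_graft:
  "dary d t \<Longrightarrow> dary_list d fs \<Longrightarrow> length fs = leaves t \<Longrightarrow> dary d (graft t fs)"
  "dary_list d ts \<Longrightarrow> dary_list d fs \<Longrightarrow> length fs = leaves_list ts \<Longrightarrow>
     dary_list d (graft_list ts fs)"
proof (induction t fs and ts fs rule: graft_graft_list.induct)
  case (1 fs)
  then show ?case by (cases fs) auto
next
  case (4 t ts fs)
  have "dary_list d (take (leaves t) fs)" "dary_list d (drop (leaves t) fs)"
    using "4.prems"(2) by (auto dest: in_set_takeD in_set_dropD)
  moreover have "length (take (leaves t) fs) = leaves t"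
    and "length (drop (leaves t) fs) = leaves_list ts"
    using "4.prems"(3) by simp_all
  moreover have "dary d t" "dary_list d ts"
    using "4.prems"(1) by simp_all
  ultimately have "dary d (graft t (take (leaves t) fs))"
    and "dary_list d (graft_list ts (drop (leaves t) fs))"
    using "4.IH" by blast+
  then show ?case by simp
qed simp_all

lemma graft_Leafs:
  "\<forall>x\<in>set fs. x = Leaf \<Longrightarrow> length fs = leaves t \<Longrightarrow> graft t fs = t"
  "\<forall>x\<in>set fs. x = Leaf \<Longrightarrow> length fs = leaves_list ts \<Longrightarrow> graft_list ts fs = ts"
proof (induction t fs and ts fs rule: graft_graft_list.induct)
  case (1 fs)
  then show ?case by (auto simp: length_Suc_conv)
next
  case (4 t ts fs)
  have "\<forall>x\<in>set (take (leaves t) fs). x = Leaf" "\<forall>x\<in>set (drop (leaves t) fs). x = Leaf"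
    using "4.prems"(1) by (auto dest: in_set_takeD in_set_dropD)
  moreover have "length (take (leaves t) fs) = leaves t"
    and "length (drop (leaves t) fs) = leaves_list ts"
    using "4.prems"(2) by simp_all
  ultimately have "graft t (take (leaves t) fs) = t" "graft_list ts (drop (leaves t) fs) = ts"
    using "4.IH" by blast+
  then show ?case by simp
qed simp_all

lemma graft_list_replicate_Leaf: "length fs = n \<Longrightarrow> graft_list (replicate n Leaf) fs = fs"
  by (induction n arbitrary: fs) (auto simp: length_Suc_conv)

lemma graft_list_append:
  "graft_list (xs @ ys) fs =
     graft_list xs (take (leaves_list xs) fs) @ graft_list ys (drop (leaves_list xs) fs)"
  by (induction xs arbitrary: fs) (auto simp: drop_take add.commute)

lemma take_graft_list:
  "take n (graft_list ts fs) = graft_list (take n ts) (take (leaves_list (take n ts)) fs)"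
  using graft_list_append[of "take n ts" "drop n ts" fs] by (cases "n \<le> length ts") auto

lemma drop_graft_list:
  "drop n (graft_list ts fs) = graft_list (drop n ts) (drop (leaves_list (take n ts)) fs)"
  using graft_list_append[of "take n ts" "drop n ts" fs] by (cases "n \<le> length ts") auto

lemma graft_graft:
  "length fs = leaves t \<Longrightarrow> length gs = leaves_list fs \<Longrightarrow>
     graft (graft t fs) gs = graft t (graft_list fs gs)"
  "length fs = leaves_list ts \<Longrightarrow> length gs = leaves_list fs \<Longrightarrow>
     graft_list (graft_list ts fs) gs = graft_list ts (graft_list fs gs)"
proof (induction t fs and ts fs arbitrary: gs and gs rule: graft_graft_list.induct)
  case (1 fs)
  then show ?case by (cases fs) auto
next
  case (4 t ts fs)
  have "length (take (leaves t) fs) = leaves t" "length (drop (leaves t) fs) = leaves_list ts"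
    using "4.prems"(1) by simp_all
  with 4 show ?case
    using leaves_graft(1) leaves_list_take_drop[of fs "leaves t"]
    by (simp add: take_graft_list drop_graft_list)
qed auto

lemma graft_inject:
  "length fs = leaves t \<Longrightarrow> length gs = leaves t \<Longrightarrow> graft t fs = graft t gs \<Longrightarrow> fs = gs"
  "length fs = leaves_list ts \<Longrightarrow> length gs = leaves_list ts \<Longrightarrow>
     graft_list ts fs = graft_list ts gs \<Longrightarrow> fs = gs"
proof (induction t fs and ts fs arbitrary: gs and gs rule: graft_graft_list.induct)
  case (1 fs)
  then show ?case by (auto simp: length_Suc_conv)
next
  case (4 t ts fs)
  then have "take (leaves t) fs = take (leaves t) gs" "drop (leaves t) fs = drop (leaves t) gs"
    by simp_all
  then show ?case by (metis append_take_drop_id)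
qed auto

lemma graft_eq_graft_refine:
  assumes "length f = leaves X" "length g = leaves X'" "length a = leaves_list f"
    and "graft X f = graft X' g"
  shows "graft X (graft_list f a) = graft X' (graft_list g a)"
proof -
  have "length a = leaves_list g"
    using assms leaves_graft(1) by metis
  then show ?thesis
    using assms graft_graft(1) by metis
qed

lemma leaves_caret [simp]: "leaves (caret d) = d"
  by (simp add: caret_def sum_list_replicate)

lemma dary_caret [simp]: "dary d (caret d)"
  by (simp add: caret_def)

lemma graft_caret: "length ts = d \<Longrightarrow> graft (caret d) ts = Node ts"
  by (simp add: caret_def graft_list_replicate_Leaf)

lemma length_attach_list [simp]: "length (attach_list d k ts) = length ts"
  by (induction ts arbitrary: k) auto

lemma leaves_attach:
  "1 \<le> d \<Longrightarrow> 1 \<le> k \<Longrightarrow> k \<le> leaves t \<Longrightarrow> leaves (attach d k t) = leaves t + (d - 1)"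
  "1 \<le> d \<Longrightarrow> 1 \<le> k \<Longrightarrow> k \<le> leaves_list ts \<Longrightarrow>
     leaves_list (attach_list d k ts) = leaves_list ts + (d - 1)"
  by (induction d k t and d k ts rule: attach_attach_list.induct) auto

lemma dary_attach:
  "dary d t \<Longrightarrow> dary d (attach d k t)"
  "dary_list d ts \<Longrightarrow> dary_list d (attach_list d k ts)"
  by (induction d k t and d k ts rule: attach_attach_list.induct) auto

lemma attach_attach:
  "1 \<le> d \<Longrightarrow> 1 \<le> k \<Longrightarrow> k < p \<Longrightarrow> p \<le> leaves t \<Longrightarrow>
     attach d k (attach d p t) = attach d (p + (d - 1)) (attach d k t)"
  "1 \<le> d \<Longrightarrow> 1 \<le> k \<Longrightarrow> k < p \<Longrightarrow> p \<le> leaves_list ts \<Longrightarrow>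
     attach_list d k (attach_list d p ts) = attach_list d (p + (d - 1)) (attach_list d k ts)"
proof (induction d k t and d k ts arbitrary: p and p rule: attach_attach_list.induct)
  case (4 d k t ts)
  consider "p \<le> leaves t" | "k \<le> leaves t" "leaves t < p" | "leaves t < k"
    using "4.prems"(3) by linarith
  then show ?case
  proof cases
    case 1
    have "k \<le> leaves t" using 1 "4.prems" by simp
    moreover have "leaves (attach d p t) = leaves t + (d - 1)"
      and "leaves (attach d k t) = leaves t + (d - 1)"
      using 1 calculation "4.prems" leaves_attach(1) by simp_all
    moreover have "attach d k (attach d p t) = attach d (p + (d - 1)) (attach d k t)"
      using 1 calculation "4.prems" "4.IH"(1) by simp
    ultimately show ?thesis using 1 by simp
  next
    case 2
    then have "leaves (attach d k t) = leaves t + (d - 1)"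
      using "4.prems" leaves_attach(1) by simp
    with 2 have "\<not> p + (d - 1) \<le> leaves (attach d k t)"
      and "p + (d - 1) - leaves (attach d k t) = p - leaves t"
      by simp_all
    with 2 show ?thesis by simp
  next
    case 3
    then have "attach_list d (k - leaves t) (attach_list d (p - leaves t) ts) =
        attach_list d (p - leaves t + (d - 1)) (attach_list d (k - leaves t) ts)"
      using "4.prems" "4.IH"(2) by simp
    moreover have "p + (d - 1) - leaves t = p - leaves t + (d - 1)" "\<not> p + (d - 1) \<le> leaves t"
      using 3 "4.prems"(3) by simp_all
    ultimately show ?thesis using 3 "4.prems"(3) by simp
  qed
qed auto

definition caret_at :: "nat \<Rightarrow> nat \<Rightarrow> nat \<Rightarrow> tree list" where
  "caret_at d n k = replicate (k - 1) Leaf @ caret d # replicate (n - k) Leaf"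

lemma length_caret_at [simp]: "1 \<le> k \<Longrightarrow> k \<le> n \<Longrightarrow> length (caret_at d n k) = n"
  by (simp add: caret_at_def)

lemma dary_caret_at: "dary_list d (caret_at d n k)"
  by (auto simp: caret_at_def)

lemma attach_eq_graft_caret_at:
  "1 \<le> k \<Longrightarrow> k \<le> leaves t \<Longrightarrow> attach d k t = graft t (caret_at d (leaves t) k)"
  "1 \<le> k \<Longrightarrow> k \<le> leaves_list ts \<Longrightarrow>
     attach_list d k ts = graft_list ts (caret_at d (leaves_list ts) k)"
proof (induction d k t and d k ts rule: attach_attach_list.induct)
  case (4 d k t ts)
  show ?case
  proof (cases "k \<le> leaves t")
    case True
    then have "take (leaves t) (caret_at d (leaves_list (t # ts)) k) = caret_at d (leaves t) k"
      and "drop (leaves t) (caret_at d (leaves_list (t # ts)) k) = replicate (leaves_list ts) Leaf"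
      using "4.prems"(1) by (simp_all add: caret_at_def take_Cons' drop_Cons')
    with True show ?thesis using 4 graft_Leafs(2) by simp
  next
    case False
    then have "take (leaves t) (caret_at d (leaves_list (t # ts)) k) = replicate (leaves t) Leaf"
      and "drop (leaves t) (caret_at d (leaves_list (t # ts)) k) =
        caret_at d (leaves_list ts) (k - leaves t)"
      using "4.prems"(1) by (simp_all add: caret_at_def drop_Cons')
    with False show ?thesis using 4 graft_Leafs(1) by simp
  qed
qed (auto simp: caret_at_def)

lemma graft_eq_graft_attach:
  assumes "i < length fs" "length fs = leaves t" "fs ! i = Node ts" "length ts = d"
  shows "graft t fs = graft (attach d (Suc i) t) (take i fs @ ts @ drop (Suc i) fs)"
proof -
  let ?E = "caret_at d (leaves t) (Suc i)" and ?fs = "take i fs @ ts @ drop (Suc i) fs"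
  have E: "?E = replicate i Leaf @ caret d # replicate (leaves t - Suc i) Leaf"
    by (simp add: caret_at_def)
  have "graft_list ?E ?fs = take i fs @ Node ts # drop (Suc i) fs"
    using assms by (simp add: E graft_list_append sum_list_replicate graft_list_replicate_Leaf
        graft_caret)
  also have "\<dots> = fs"
    using assms by (metis id_take_nth_drop)
  finally have "graft_list ?E ?fs = fs" .
  moreover have "length ?fs = leaves_list ?E"
    using assms by (simp add: E sum_list_replicate)
  ultimately show ?thesis
    using assms attach_eq_graft_caret_at(1)[of "Suc i" t d] graft_graft(1)[of ?E t ?fs] by simp
qed

lemma common_expansion_list:
  assumes "\<And>s u. s \<in> set ss \<Longrightarrow> u \<in> set us \<Longrightarrow> \<exists>a b. dary_list d a \<and> dary_list d b \<and>
      length a = leaves s \<and> length b = leaves u \<and> graft s a = graft u b"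
    and "length ss = length us"
  shows "\<exists>a b. dary_list d a \<and> dary_list d b \<and>
      length a = leaves_list ss \<and> length b = leaves_list us \<and> graft_list ss a = graft_list us b"
  using assms
proof (induction ss arbitrary: us)
  case Nil
  then show ?case by auto
next
  case (Cons s ss)
  then obtain u us' where us: "us = u # us'" and len: "length ss = length us'"
    by (cases us) auto
  obtain a b where ab: "dary_list d a" "dary_list d b" "length a = leaves s" "length b = leaves u"
    "graft s a = graft u b"
    using Cons.prems(1)[of s u] us by auto
  have "\<exists>a b. dary_list d a \<and> dary_list d b \<and> length a = leaves_list ss \<and>
      length b = leaves_list us' \<and> graft_list ss a = graft_list us' b"
  proof (rule Cons.IH[OF _ len])
    fix s' u' assume "s' \<in> set ss" "u' \<in> set us'"
    then show "\<exists>a b. dary_list d a \<and> dary_list d b \<and> length a = leaves s' \<and>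
        length b = leaves u' \<and> graft s' a = graft u' b"
      using Cons.prems(1)[of s' u'] us by simp
  qed
  then obtain a' b' where ab': "dary_list d a'" "dary_list d b'"
    "length a' = leaves_list ss" "length b' = leaves_list us'"
    "graft_list ss a' = graft_list us' b'"
    by blast
  have "graft_list (s # ss) (a @ a') = graft s a # graft_list ss a'"
    and "graft_list (u # us') (b @ b') = graft u b # graft_list us' b'"
    using ab(3,4) by simp_all
  with ab ab' show ?case
    unfolding us by (intro exI[of _ "a @ a'"] exI[of _ "b @ b'"]) auto
qed

lemma common_expansion:
  "dary d S \<Longrightarrow> dary d T \<Longrightarrow> \<exists>a b. dary_list d a \<and> dary_list d b \<and>
     length a = leaves S \<and> length b = leaves T \<and> graft S a = graft T b"
proof (induction S arbitrary: T)
  case Leaf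
  then show ?case
    using graft_Leafs(1)[of "replicate (leaves T) Leaf" T]
    by (intro exI[of _ "[T]"] exI[of _ "replicate (leaves T) Leaf"]) auto
next
  case (Node ss)
  show ?case
  proof (cases T)
    case Leaf
    then show ?thesis
      using Node.prems graft_Leafs(1)[of "replicate (leaves (Node ss)) Leaf" "Node ss"]
      by (intro exI[of _ "replicate (leaves (Node ss)) Leaf"] exI[of _ "[Node ss]"]) auto
  next
    case (Node us)
    have "\<exists>a b. dary_list d a \<and> dary_list d b \<and> length a = leaves_list ss \<and>
        length b = leaves_list us \<and> graft_list ss a = graft_list us b"
    proof (rule common_expansion_list)
      fix s u assume "s \<in> set ss" "u \<in> set us"
      with Node.prems Node show "\<exists>a b. dary_list d a \<and> dary_list d b \<and> length a = leaves s \<and>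
          length b = leaves u \<and> graft s a = graft u b"
        by (intro Node.IH) simp_all
    qed (use Node.prems Node in simp)
    then show ?thesis using Node by simp
  qed
qed

lemma common_refinement:
  "dary_list d fs \<Longrightarrow> dary_list d gs \<Longrightarrow> length fs = length gs \<Longrightarrow>
     \<exists>a b. dary_list d a \<and> dary_list d b \<and>
       length a = leaves_list fs \<and> length b = leaves_list gs \<and> graft_list fs a = graft_list gs b"
  by (intro common_expansion_list; metis common_expansion)

fun graft_equiv :: "nat \<Rightarrow> tree \<times> tree \<Rightarrow> tree \<times> tree \<Rightarrow> bool" where
  "graft_equiv d (X, Y) (X', Y') \<longleftrightarrow> valid_pair d (X, Y) \<and> valid_pair d (X', Y') \<and>
     (\<exists>f g. dary_list d f \<and> dary_list d g \<and> length f = leaves X \<and> length g = leaves X' \<and>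
        graft X f = graft X' g \<and> graft Y f = graft Y' g)"

lemma graft_equivI:
  assumes "valid_pair d (X, Y)" "valid_pair d (X', Y')" "dary_list d f" "dary_list d g"
    and "length f = leaves X" "length g = leaves X'"
    and "graft X f = graft X' g" "graft Y f = graft Y' g"
  shows "graft_equiv d (X, Y) (X', Y')"
  using assms by auto

lemma graft_equivE:
  assumes "graft_equiv d (X, Y) (X', Y')"
  obtains f g where "valid_pair d (X, Y)" "valid_pair d (X', Y')" "dary_list d f" "dary_list d g"
    and "length f = leaves X" "length g = leaves X'"
    and "graft X f = graft X' g" "graft Y f = graft Y' g"
  using assms by auto

lemma graft_equiv_imp_valid_pair: "graft_equiv d p q \<Longrightarrow> valid_pair d p \<and> valid_pair d q"
  by (cases p; cases q) (simp add: graft_equiv.simps)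

lemma graft_equiv_refl: "valid_pair d p \<Longrightarrow> graft_equiv d p p"
proof (cases p)
  case (Pair X Y)
  assume "valid_pair d p"
  with Pair show ?thesis
    using graft_Leafs(1)[of "replicate (leaves X) Leaf"]
    by (auto simp: graft_equiv.simps intro!: exI[of _ "replicate (leaves X) Leaf"])
qed

lemma graft_equiv_sym: "graft_equiv d p q \<Longrightarrow> graft_equiv d q p"
  by (cases p; cases q) (simp add: graft_equiv.simps, metis)

lemma graft_equiv_trans:
  assumes "graft_equiv d p q" "graft_equiv d q r"
  shows "graft_equiv d p r"
proof -
  obtain X Y X' Y' X'' Y'' where pqr: "p = (X, Y)" "q = (X', Y')" "r = (X'', Y'')"
    by (cases p, cases q, cases r) blast
  obtain f g where v: "valid_pair d (X, Y)" "valid_pair d (X', Y')"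
    and f: "dary_list d f" and g: "dary_list d g"
    and lf: "length f = leaves X" and lg: "length g = leaves X'"
    and fg: "graft X f = graft X' g" "graft Y f = graft Y' g"
    using assms(1) unfolding pqr by (rule graft_equivE)
  obtain g' h where v': "valid_pair d (X'', Y'')"
    and g': "dary_list d g'" and h: "dary_list d h"
    and lg': "length g' = leaves X'" and lh: "length h = leaves X''"
    and gh: "graft X' g' = graft X'' h" "graft Y' g' = graft Y'' h"
    using assms(2) unfolding pqr by (rule graft_equivE)
  obtain a b where a: "dary_list d a" "length a = leaves_list g"
    and b: "dary_list d b" "length b = leaves_list g'"
    and ab: "graft_list g a = graft_list g' b"
    using common_refinement[OF g g'] lg lg' by auto
  have "leaves_list f = leaves_list g" "leaves_list h = leaves_list g'"
    using fg(1) gh(1) leaves_graft(1)[OF lf] leaves_graft(1)[OF lg]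
      leaves_graft(1)[OF lg'] leaves_graft(1)[OF lh] by simp_all
  then have dfh: "dary_list d (graft_list f a)" "dary_list d (graft_list h b)"
    using dary_graft(2)[OF f a(1)] dary_graft(2)[OF h b(1)] a(2) b(2) by simp_all
  have refined: "graft Z (graft_list f a) = graft Z'' (graft_list h b)"
    if "length f = leaves Z" "length g = leaves Z'" "length g' = leaves Z'" "length h = leaves Z''"
      and "graft Z f = graft Z' g" "graft Z' g' = graft Z'' h" for Z Z' Z''
    using graft_eq_graft_refine[OF that(2,1) a(2) that(5)[symmetric]] ab
      graft_eq_graft_refine[OF that(3,4) b(2) that(6)] by simp
  have "length f = leaves Y" "length g = leaves Y'" "length g' = leaves Y'" "length h = leaves Y''"
    using v v' lf lg lg' lh by simp_all
  then have "graft X (graft_list f a) = graft X'' (graft_list h b)"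
    and "graft Y (graft_list f a) = graft Y'' (graft_list h b)"
    using refined lf lg lg' lh fg gh by blast+
  with lf lh show ?thesis
    unfolding pqr by (intro graft_equivI[OF v(1) v' dfh]) simp_all
qed
text \<open>Unlike transitivity, this needs injectivity of grafting: the two expansions of the middle
  tree \<open>U\<close> are refined to a common one, which then forces the same refinement of \<open>Y\<close>.\<close>

lemma graft_equiv_mult:
  assumes "graft_equiv d (T, U) (X, Y)" "graft_equiv d (U, W) (Y, Z)"
  shows "graft_equiv d (T, W) (X, Z)"
proof -
  have v: "valid_pair d (T, U)" "valid_pair d (X, Y)" "valid_pair d (U, W)" "valid_pair d (Y, Z)"
    using assms graft_equiv_imp_valid_pair by blast+
  obtain f g where f: "dary_list d f" "length f = leaves U"
    and g: "dary_list d g" "length g = leaves Y"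
    and fg: "graft T f = graft X g" "graft U f = graft Y g"
    using assms(1) v(1,2) by (elim graft_equivE) simp
  obtain f' g' where f': "dary_list d f'" "length f' = leaves U"
    and g': "dary_list d g'" "length g' = leaves Y"
    and fg': "graft U f' = graft Y g'" "graft W f' = graft Z g'"
    using assms(2) by (elim graft_equivE) simp
  obtain a b where a: "dary_list d a" "length a = leaves_list f"
    and b: "dary_list d b" "length b = leaves_list f'"
    and ab: "graft_list f a = graft_list f' b"
    using common_refinement[OF f(1) f'(1)] f(2) f'(2) by auto
  have "graft Y (graft_list g a) = graft U (graft_list f a)"
    using graft_eq_graft_refine[OF f(2) g(2) a(2) fg(2)] by simp
  also have "\<dots> = graft Y (graft_list g' b)"
    using ab graft_eq_graft_refine[OF f'(2) g'(2) b(2) fg'(1)] by simp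
  finally have gab: "graft_list g a = graft_list g' b"
    using g(2) g'(2) by (intro graft_inject(1)) simp_all
  have lengths:
    "length f = leaves T" "length g = leaves X" "length f' = leaves W" "length g' = leaves Z"
    using v f(2) g(2) f'(2) g'(2) by simp_all
  have "graft T (graft_list f a) = graft X (graft_list g a)"
    using graft_eq_graft_refine[OF lengths(1,2) a(2) fg(1)] .
  moreover have "graft W (graft_list f a) = graft Z (graft_list g a)"
    using graft_eq_graft_refine[OF lengths(3,4) b(2) fg'(2)] ab gab by simp
  moreover have "leaves_list g = leaves_list f"
    using fg(2) leaves_graft(1)[OF f(2)] leaves_graft(1)[OF g(2)] by simp
  then have "dary_list d (graft_list f a)" "dary_list d (graft_list g a)"
    using dary_graft(2)[OF f(1) a(1)] dary_graft(2)[OF g(1) a(1)] a(2) by simp_all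
  moreover have "valid_pair d (T, W)" "valid_pair d (X, Z)"
    using v by simp_all
  ultimately show ?thesis
    using lengths(1,2) by (intro graft_equivI) simp_all
qed

lemma graft_equiv_attach:
  assumes "valid_pair d (X, Y)" "1 \<le> d" "1 \<le> k" "k \<le> leaves X"
  shows "graft_equiv d (X, Y) (attach d k X, attach d k Y)"
proof -
  let ?E = "caret_at d (leaves X) k" and ?L = "replicate (leaves X + (d - 1)) Leaf"
  have lengths: "leaves (attach d k X) = leaves X + (d - 1)"
    "leaves (attach d k Y) = leaves X + (d - 1)"
    using assms leaves_attach(1)[of d k X] leaves_attach(1)[of d k Y] by simp_all
  then have "valid_pair d (attach d k X, attach d k Y)"
    using assms(1) dary_attach(1) by simp
  moreover have "graft (attach d k X) ?L = attach d k X" "graft (attach d k Y) ?L = attach d k Y"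
    using lengths graft_Leafs(1) by simp_all
  then have "graft X ?E = graft (attach d k X) ?L" "graft Y ?E = graft (attach d k Y) ?L"
    using assms attach_eq_graft_caret_at(1)[of k X d] attach_eq_graft_caret_at(1)[of k Y d]
    by simp_all
  ultimately show ?thesis
    using assms lengths by (intro graft_equivI[OF assms(1) _ dary_caret_at]) simp_all
qed

lemma graft_equiv_Leaf: "dary d X \<Longrightarrow> graft_equiv d (Leaf, Leaf) (X, X)"
  using graft_Leafs(1)[of "replicate (leaves X) Leaf" X]
  by (intro graft_equivI[of _ _ _ _ _ "[X]" "replicate (leaves X) Leaf"]) simp_all

declare graft_equiv.simps [simp del]

lemma fd_equiv_iff_equivclp: "fd_equiv d p q \<longleftrightarrow> valid_pair d p \<and> equivclp (expand d) p q"
  by (simp add: fd_equiv_def equivclp_def symclp_def [abs_def])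

lemma expand_imp_graft_equiv: "1 \<le> d \<Longrightarrow> expand d p q \<Longrightarrow> graft_equiv d p q"
  unfolding expand_def using graft_equiv_attach[of d "fst p" "snd p"] by auto

lemma fd_equiv_imp_graft_equiv:
  assumes "1 \<le> d" "fd_equiv d p q"
  shows "graft_equiv d p q"
proof -
  have "equivclp (expand d) p q" and p: "valid_pair d p"
    using assms(2) by (simp_all add: fd_equiv_iff_equivclp)
  then show ?thesis
  proof (induction rule: equivclp_induct)
    case base
    then show ?case using graft_equiv_refl by blast
  next
    case (step y z)
    then show ?case
      using expand_imp_graft_equiv[OF assms(1)] graft_equiv_sym graft_equiv_trans by blast
  qed
qed

lemma rtranclp_expand_graft:
  "1 \<le> d \<Longrightarrow> valid_pair d (X, Y) \<Longrightarrow> dary_list d f \<Longrightarrow> length f = leaves X \<Longrightarrow>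
     (expand d)\<^sup>*\<^sup>* (X, Y) (graft X f, graft Y f)"
proof (induction "size_list size f" arbitrary: X Y f rule: less_induct)
  case less
  show ?case
  proof (cases "\<forall>x\<in>set f. x = Leaf")
    case True
    then show ?thesis
      using less.prems graft_Leafs(1) by simp
  next
    case False
    then obtain i ts where i: "i < length f" "f ! i = Node ts"
      by (metis in_set_conv_nth tree.exhaust)
    then have ts: "length ts = d" "dary_list d ts"
      using less.prems(3) nth_mem by fastforce+
    let ?X = "attach d (Suc i) X" and ?Y = "attach d (Suc i) Y"
      and ?f = "take i f @ ts @ drop (Suc i) f"
    have "expand d (X, Y) (?X, ?Y)"
      unfolding expand_def using less.prems(2,4) i(1) by (intro conjI exI[of _ "Suc i"]) auto
    moreover have "(expand d)\<^sup>*\<^sup>* (?X, ?Y) (graft ?X ?f, graft ?Y ?f)"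
    proof (rule less.hyps)
      have "f = take i f @ Node ts # drop (Suc i) f"
        using i by (metis id_take_nth_drop)
      then have "size_list size f = size_list size (take i f @ Node ts # drop (Suc i) f)"
        by (rule arg_cong)
      then show "size_list size ?f < size_list size f" by simp
      show "valid_pair d (?X, ?Y)"
        using graft_equiv_imp_valid_pair[OF graft_equiv_attach[OF less.prems(2,1), of "Suc i"]]
          i(1) less.prems(4) by simp
      show "dary_list d ?f"
        using less.prems(3) ts(2) by (auto dest: in_set_takeD in_set_dropD)
      show "length ?f = leaves ?X"
        using less.prems(1,4) i(1) ts(1) leaves_attach(1)[of d "Suc i" X] by simp
    qed (rule less.prems(1))
    moreover have "graft X f = graft ?X ?f" "graft Y f = graft ?Y ?f"
      using graft_eq_graft_attach[OF i(1) _ i(2) ts(1)] less.prems(2,4) by simp_all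
    ultimately show ?thesis
      by (simp add: converse_rtranclp_into_rtranclp)
  qed
qed

lemma graft_equiv_imp_fd_equiv:
  assumes "1 \<le> d" "graft_equiv d p q"
  shows "fd_equiv d p q"
proof -
  obtain X Y X' Y' where pq: "p = (X, Y)" "q = (X', Y')"
    by (cases p, cases q) blast
  obtain f g where v: "valid_pair d (X, Y)" "valid_pair d (X', Y')"
    and fg: "dary_list d f" "dary_list d g" "length f = leaves X" "length g = leaves X'"
    and eq: "graft X f = graft X' g" "graft Y f = graft Y' g"
    using assms(2) unfolding pq by (rule graft_equivE)
  have "(expand d)\<^sup>*\<^sup>* (X, Y) (graft X f, graft Y f)"
    and "(expand d)\<^sup>*\<^sup>* (X', Y') (graft X f, graft Y f)"
    using rtranclp_expand_graft[OF assms(1) v(1) fg(1,3)]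
      rtranclp_expand_graft[OF assms(1) v(2) fg(2,4)]
    unfolding eq .
  then have "equivclp (expand d) (X, Y) (X', Y')"
    by (meson converse_rtranclp_into_equivclp equivclp_trans rtranclp_into_equivclp)
  then show ?thesis
    using v(1) unfolding pq by (simp add: fd_equiv_iff_equivclp)
qed

lemma graft_equiv_fd_mult:
  assumes "1 \<le> d" "graft_equiv d p (X, Y)" "graft_equiv d q (Y, Z)"
  shows "graft_equiv d (fd_mult d p q) (X, Z)"
proof -
  let ?P = "\<lambda>r. \<exists>T U W. fd_equiv d p (T, U) \<and> fd_equiv d q (U, W) \<and> r = (T, W)"
  have "?P (X, Z)"
    using assms graft_equiv_imp_fd_equiv by blast
  then have "?P (fd_mult d p q)"
    unfolding fd_mult_def by (rule someI)
  then obtain T U W where TUW: "fd_equiv d p (T, U)" "fd_equiv d q (U, W)" "fd_mult d p q = (T, W)"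
    by blast
  have "graft_equiv d (T, U) (X, Y)" "graft_equiv d (U, W) (Y, Z)"
    using fd_equiv_imp_graft_equiv[OF assms(1)] TUW(1,2) assms(2,3)
      graft_equiv_sym graft_equiv_trans
    by blast+
  then show ?thesis
    using TUW(3) graft_equiv_mult by simp
qed

lemma A_iter_0 [simp]: "A_iter d k T 0 = T"
  and A_iter_Suc [simp]: "A_iter d k T (Suc m) = attach d k (A_iter d k T m)"
  by (simp_all add: A_iter_def)

lemma B_iter_Suc_eq: "B_iter d l T (Suc j) = attach d (l + j * (d - 1)) (B_iter d l T j)"
  by (cases j) simp_all

declare B_iter.simps(2) [simp del] B_iter_Suc_eq [simp]

lemma leaves_A_iter:
  "1 \<le> d \<Longrightarrow> 1 \<le> k \<Longrightarrow> k \<le> leaves T \<Longrightarrow> leaves (A_iter d k T m) = leaves T + m * (d - 1)"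
  by (induction m) (simp_all add: leaves_attach(1))

lemma leaves_B_iter:
  "1 \<le> d \<Longrightarrow> 1 \<le> l \<Longrightarrow> l \<le> leaves T \<Longrightarrow> leaves (B_iter d l T j) = leaves T + j * (d - 1)"
  by (induction j) (simp_all add: leaves_attach(1))

lemma graft_equiv_generator_B_iter:
  assumes "1 \<le> d" "dary d T" "1 \<le> k" "k < l" "l \<le> leaves T"
  shows "graft_equiv d (attach d k T, attach d l T)
    (attach d k (B_iter d l T j), B_iter d l T (Suc j))"
proof (induction j)
  case 0
  have "valid_pair d (attach d k T, attach d l T)"
    using assms leaves_attach(1)[of d k T] leaves_attach(1)[of d l T] dary_attach(1) by simp
  then show ?case
    using graft_equiv_refl by simp
next
  case (Suc j)
  let ?B = "B_iter d l T j" and ?p = "l + j * (d - 1)" and ?p' = "l + Suc j * (d - 1)"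
  have "leaves ?B = leaves T + j * (d - 1)"
    using assms leaves_B_iter by simp
  then have p: "?p \<le> leaves ?B" and p': "?p' \<le> leaves (attach d k ?B)"
    using assms leaves_attach(1)[of d k ?B] by simp_all
  have "attach d k (B_iter d l T (Suc j)) = attach d (?p + (d - 1)) (attach d k ?B)"
    using assms p attach_attach(1)[of d k ?p ?B] by simp
  also have "?p + (d - 1) = ?p'"
    by simp
  finally have "attach d k (B_iter d l T (Suc j)) = attach d ?p' (attach d k ?B)" .
  moreover have "graft_equiv d (attach d k ?B, B_iter d l T (Suc j))
      (attach d ?p' (attach d k ?B), attach d ?p' (B_iter d l T (Suc j)))"
    using Suc.IH graft_equiv_imp_valid_pair assms(1,4) p' by (intro graft_equiv_attach) auto
  ultimately show ?case
    using Suc.IH graft_equiv_trans by simp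
qed

lemma graft_equiv_fd_pow:
  assumes d: "1 \<le> d" and T: "dary d T" "1 \<le> k" "k < l" "l \<le> leaves T"
  shows "graft_equiv d (fd_pow d (attach d k T, attach d l T) m) (A_iter d k T m, B_iter d l T m)"
proof (induction m)
  case 0
  then show ?case using graft_equiv_Leaf[OF T(1)] by simp
next
  case (Suc m)
  have "valid_pair d (A_iter d k T m, B_iter d l T m)" "k \<le> leaves (A_iter d k T m)"
    using graft_equiv_imp_valid_pair[OF Suc.IH] leaves_A_iter[OF d T(2)] T by simp_all
  then have "graft_equiv d (A_iter d k T m, B_iter d l T m)
      (A_iter d k T (Suc m), attach d k (B_iter d l T m))"
    using graft_equiv_attach[OF _ d T(2)] by simp
  then have "graft_equiv d (fd_pow d (attach d k T, attach d l T) m)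
      (A_iter d k T (Suc m), attach d k (B_iter d l T m))"
    using Suc.IH graft_equiv_trans by blast
  then show ?case
    using graft_equiv_fd_mult[OF d _ graft_equiv_generator_B_iter[OF d T]] by simp
qed

theorem mainTheorem7:
  fixes d n k l m :: nat and T :: tree
  assumes "d \<ge> 2" and "dary d T" and "leaves T = n"
    and "1 \<le> k" and "k < l" and "l \<le> n" and "m \<ge> 1"
  shows "fd_equiv d (fd_pow d (attach d k T, attach d l T) m)
                    (A_iter d k T m, B_iter d l T m)"
proof -
  have d: "1 \<le> d"
    using assms(1) by simp
  have "graft_equiv d (fd_pow d (attach d k T, attach d l T) m) (A_iter d k T m, B_iter d l T m)"
    using graft_equiv_fd_pow[OF d assms(2,4,5)] assms(3,6) by simp
  then show ?thesis
    by (rule graft_equiv_imp_fd_equiv[OF d])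
qed

end
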